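(* Let $L$ be a nonabelian finite simple group whose order is divisible by a prime $r$, and let $x\in\mathrm{Aut}(L)$, $x\neq 1$. Suppose $x$ leaves invariant a subgroup $H\leq L$ and a normal subgroup $N$ of $H$, thus inducing an automorphism $\overline{x}$ of $\overline{H}=H/N$. Suppose also that $\overline{H}$ contains a simple $\overline{x}$-invariant subgroup $\overline{L}$ on which $\overline{x}$ acts nontrivially and whose order is divisible by $r$. Then $\beta_r(x,L)\leq\beta_r(\overline{x},\overline{L})$.
   Context: For a nonabelian finite simple group $L$ (identified with $\mathrm{Inn}(L)\leq\mathrm{Aut}(L)$), a nontrivial $x\in\mathrm{Aut}(L)$ and a prime $r$ dividing $|L|$, $\beta_r(x,L)$ denotes the smallest number $k$ such that there exist $g_1,\dots,g_k\in L$ for which $\langle x^{g_1},\dots,x^{g_k}\rangle\leq\langle L,x\rangle$ has order divisible by $r$. In $\beta_r(\overline{x},\overline{L})$, $\overline{x}$ is regarded (via its restriction) as an automorphism of $\overline{L}$. *)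

theory Defs
  imports "HOL-Algebra.Algebra" "HOL-Library.Extended_Nat"
begin

definition inner_aut :: "('a, 'b) monoid_scheme \<Rightarrow> 'a \<Rightarrow> ('a \<Rightarrow> 'a)" where
  "inner_aut G g = (\<lambda>a\<in>carrier G. g \<otimes>\<^bsub>G\<^esub> a \<otimes>\<^bsub>G\<^esub> inv\<^bsub>G\<^esub> g)"

definition aut_conj :: "('a, 'b) monoid_scheme \<Rightarrow> ('a \<Rightarrow> 'a) \<Rightarrow> 'a \<Rightarrow> ('a \<Rightarrow> 'a)" where
  "aut_conj G x g =
     inv\<^bsub>AutoGroup G\<^esub> (inner_aut G g) \<otimes>\<^bsub>AutoGroup G\<^esub> x \<otimes>\<^bsub>AutoGroup G\<^esub> inner_aut G g"

text \<open>beta_r(x,G): least k such that some g_1..g_k in G give a subgroup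
  <x^{g_1},...,x^{g_k}> of Aut(G) of order divisible by r (infinity if no such k).\<close>
definition beta :: "nat \<Rightarrow> ('a, 'b) monoid_scheme \<Rightarrow> ('a \<Rightarrow> 'a) \<Rightarrow> enat" where
  "beta r G x = Inf {enat k | k. \<exists>gs. length gs = k \<and> set gs \<subseteq> carrier G \<and>
       r dvd card (generate (AutoGroup G) (aut_conj G x ` set gs))}"

end

theory Submission
  imports Defs
begin

text \<open>Let S be the group of automorphisms of L that permute the cosets in Lb. Taking images
  of cosets is a homomorphism phi from S to Aut(Lb), and for g in H with Ng in Lb it maps
  conjugation by g to conjugation by Ng; hence phi(x^g) = xb^(Ng), where xb is the automorphism
  induced by x. If conjugates xb^(Ng_1), ..., xb^(Ng_k) generate a subgroup of order divisible
  by r, then phi maps the subgroup generated by x^(g_1), ..., x^(g_k) onto it, and the order of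
  a homomorphic image divides the order of the source.\<close>

lemma (in group_hom) card_image_subgroup_dvd:
  assumes "subgroup K G" "finite K"
  shows "card (h ` K) dvd card K"
proof -
  let ?K = "G\<lparr>carrier := K\<rparr>" and ?hK = "H\<lparr>carrier := h ` K\<rparr>"
  have "group_hom ?K ?hK h"
  proof (intro group_hom.intro group_hom_axioms.intro)
    show "group ?K" using assms(1) by (rule G.subgroup_imp_group)
    show "group ?hK" using subgroup_img_is_subgroup[OF assms(1)] by (rule H.subgroup_imp_group)
    show "h \<in> hom ?K ?hK"
      using subgroup.subset[OF assms(1)] by (auto simp: hom_def subsetD)
  qed
  then interpret hK: group_hom ?K ?hK h .
  have "card (carrier (?K Mod kernel ?K ?hK h)) = card (h ` K)"
    using iso_same_card[OF hK.FactGroup_iso] by simp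
  moreover have "card (carrier (?K Mod kernel ?K ?hK h)) * card (kernel ?K ?hK h) = card K"
    using hK.G.lagrange[OF hK.subgroup_kernel] by (simp add: FactGroup_def order_def)
  ultimately show ?thesis by (metis dvd_triv_left)
qed

lemma generate_hom_image_card_dvd:
  assumes "group A" "subgroup S A" "finite S" "group_hom (A\<lparr>carrier := S\<rparr>) B \<phi>" "Y \<subseteq> S"
  shows "card (generate B (\<phi> ` Y)) dvd card (generate A Y)"
proof -
  interpret \<phi>: group_hom "A\<lparr>carrier := S\<rparr>" B \<phi> by fact
  have Y: "Y \<subseteq> carrier (A\<lparr>carrier := S\<rparr>)" using assms(5) by simp
  have "subgroup (generate (A\<lparr>carrier := S\<rparr>) Y) (A\<lparr>carrier := S\<rparr>)"
    using \<phi>.G.generate_is_subgroup[OF Y] .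
  moreover have "finite (generate (A\<lparr>carrier := S\<rparr>) Y)"
    using subgroup.subset[OF calculation] assms(3) by (auto intro: finite_subset)
  ultimately have "card (\<phi> ` generate (A\<lparr>carrier := S\<rparr>) Y) dvd card (generate (A\<lparr>carrier := S\<rparr>) Y)"
    by (rule \<phi>.card_image_subgroup_dvd)
  then show ?thesis
    using \<phi>.generate_img[OF Y] group.generate_consistent[OF assms(1,5,2)] by simp
qed

lemma AutoGroup_carrier [simp]: "carrier (AutoGroup G) = auto G"
  by (simp add: AutoGroup_def)

lemma AutoGroup_one: "\<one>\<^bsub>AutoGroup G\<^esub> = (\<lambda>c\<in>carrier G. c)"
  by (simp add: AutoGroup_def BijGroup_def)

lemma AutoGroup_mult:
  "a \<in> auto G \<Longrightarrow> b \<in> auto G \<Longrightarrow> a \<otimes>\<^bsub>AutoGroup G\<^esub> b = compose (carrier G) a b"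
  by (simp add: AutoGroup_def BijGroup_def auto_def)

lemma AutoGroup_mult_apply:
  "a \<in> auto G \<Longrightarrow> b \<in> auto G \<Longrightarrow> c \<in> carrier G \<Longrightarrow> (a \<otimes>\<^bsub>AutoGroup G\<^esub> b) c = a (b c)"
  by (simp add: AutoGroup_mult compose_def)

lemma finite_auto: "finite (carrier G) \<Longrightarrow> finite (auto G)"
  by (rule finite_subset[of _ "carrier G \<rightarrow>\<^sub>E carrier G"])
     (auto simp: auto_def Bij_def bij_betw_def extensional_def finite_PiE)

lemma image_AutoGroup_mult:
  assumes "a \<in> auto G" "b \<in> auto G" "C \<subseteq> carrier G"
  shows "(a \<otimes>\<^bsub>AutoGroup G\<^esub> b) ` C = a ` b ` C"
  using assms AutoGroup_mult_apply[OF assms(1,2)] by (force simp: subsetD)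

lemma (in group) image_AutoGroup_inv:
  assumes "a \<in> auto G" "C \<subseteq> carrier G"
  shows "(inv\<^bsub>AutoGroup G\<^esub> a) ` a ` C = C"
proof -
  interpret A: group "AutoGroup G" by (rule AutoGroup)
  have "inv\<^bsub>AutoGroup G\<^esub> a \<in> auto G" using A.inv_closed assms(1) by simp
  then have "(inv\<^bsub>AutoGroup G\<^esub> a) ` a ` C = (inv\<^bsub>AutoGroup G\<^esub> a \<otimes>\<^bsub>AutoGroup G\<^esub> a) ` C"
    by (rule image_AutoGroup_mult[OF _ assms, symmetric])
  then show ?thesis using assms A.l_inv by (auto simp: AutoGroup_one subsetD)
qed

lemma auto_image_set_mult:
  assumes "a \<in> auto G" "C \<subseteq> carrier G" "D \<subseteq> carrier G"
  shows "a ` (C <#>\<^bsub>G\<^esub> D) = a ` C <#>\<^bsub>G\<^esub> a ` D"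
proof -
  have "a (c \<otimes>\<^bsub>G\<^esub> d) = a c \<otimes>\<^bsub>G\<^esub> a d" if "c \<in> C" "d \<in> D" for c d
    using assms that by (auto simp: auto_def hom_def subsetD)
  then show ?thesis unfolding set_mult_def by force
qed

lemma (in group) inner_aut_in_auto:
  assumes "g \<in> carrier G"
  shows "inner_aut G g \<in> auto G"
proof -
  have "inner_aut G g \<in> Bij (carrier G)"
    using conjugation_is_hom assms unfolding hom_def BijGroup_def inner_aut_def by auto
  moreover have "g \<otimes> (c \<otimes> d) \<otimes> inv g = g \<otimes> c \<otimes> inv g \<otimes> (g \<otimes> d \<otimes> inv g)"
    if "c \<in> carrier G" "d \<in> carrier G" for c d
    using that assms by (simp add: m_assoc[symmetric]) (simp add: m_assoc)
  then have "inner_aut G g \<in> hom G G"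
    using assms unfolding hom_def inner_aut_def by auto
  ultimately show ?thesis by (simp add: auto_def)
qed

lemma inner_aut_subgroup:
  assumes "group G" "subgroup K G" "g \<in> K" "c \<in> K"
  shows "inner_aut (G\<lparr>carrier := K\<rparr>) g c = inner_aut G g c"
  using assms subgroup.mem_carrier[OF assms(2)]
  by (simp add: inner_aut_def group.m_inv_consistent)

lemma (in group) inner_aut_image:
  assumes "g \<in> carrier G" "C \<subseteq> carrier G"
  shows "inner_aut G g ` C = (g <#\<^bsub>G\<^esub> C) #> (inv g)"
  using assms by (force simp: inner_aut_def l_coset_def r_coset_def)

lemma (in normal) inner_aut_image_rcos:
  assumes "g \<in> carrier G" "h \<in> carrier G"
  shows "inner_aut G g ` (H #> h) = H #> (g \<otimes> h \<otimes> inv g)"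
proof -
  have "inner_aut G g ` (H #> h) = ((g <#\<^bsub>G\<^esub> H) #> h) #> (inv g)"
    using assms by (simp add: inner_aut_image r_coset_subset_G subset coset_assoc)
  also have "\<dots> = H #> (g \<otimes> h \<otimes> inv g)"
    using assms by (simp add: coset_eq[rule_format, symmetric] coset_mult_assoc subset)
  finally show ?thesis .
qed

lemma (in normal) inner_aut_FactGroup:
  assumes "g \<in> carrier G" "C \<in> carrier (G Mod H)"
  shows "inner_aut (G Mod H) (H #> g) C = inner_aut G g ` C"
proof -
  obtain h where h: "h \<in> carrier G" "C = H #> h"
    using assms(2) by (auto simp: FactGroup_def RCOSETS_def)
  have "H #> g \<in> carrier (G Mod H)" using assms(1) by (auto simp: FactGroup_def RCOSETS_def)
  then have "inner_aut (G Mod H) (H #> g) C = (H #> g) <#> (H #> h) <#> (H #> inv g)"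
    using assms h by (simp add: inner_aut_def inv_FactGroup rcos_inv)
  also have "\<dots> = H #> (g \<otimes> h \<otimes> inv g)"
    using assms h by (simp add: rcos_sum)
  also have "\<dots> = inner_aut G g ` C"
    using assms h by (simp add: inner_aut_image_rcos)
  finally show ?thesis .
qed

definition aut_stabilizer :: "('a, 'b) monoid_scheme \<Rightarrow> 'a set set \<Rightarrow> ('a \<Rightarrow> 'a) set" where
  "aut_stabilizer G Y = {a \<in> auto G. (\<lambda>C. a ` C) ` Y = Y}"

definition induced_aut :: "'a set set \<Rightarrow> ('a \<Rightarrow> 'a) \<Rightarrow> 'a set \<Rightarrow> 'a set" where
  "induced_aut Y a = (\<lambda>C\<in>Y. a ` C)"

lemma (in group) subgroup_aut_stabilizer:
  assumes "Y \<subseteq> Pow (carrier G)"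
  shows "subgroup (aut_stabilizer G Y) (AutoGroup G)"
proof -
  interpret A: group "AutoGroup G" by (rule AutoGroup)
  show ?thesis
  proof
    show "aut_stabilizer G Y \<subseteq> carrier (AutoGroup G)" by (auto simp: aut_stabilizer_def)
  next
    fix a b assume "a \<in> aut_stabilizer G Y" "b \<in> aut_stabilizer G Y"
    then have a: "a \<in> auto G" "(\<lambda>C. a ` C) ` Y = Y" and b: "b \<in> auto G" "(\<lambda>C. b ` C) ` Y = Y"
      by (auto simp: aut_stabilizer_def)
    have "(\<lambda>C. (a \<otimes>\<^bsub>AutoGroup G\<^esub> b) ` C) ` Y = (\<lambda>C. a ` b ` C) ` Y"
      using image_AutoGroup_mult[OF a(1) b(1)] assms by (simp add: subset_iff)
    also have "\<dots> = Y" using a(2) b(2) by (metis image_image)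
    finally show "a \<otimes>\<^bsub>AutoGroup G\<^esub> b \<in> aut_stabilizer G Y"
      using a b A.m_closed by (simp add: aut_stabilizer_def)
  next
    have "(\<lambda>C. \<one>\<^bsub>AutoGroup G\<^esub> ` C) ` Y = Y"
      using assms by (simp add: AutoGroup_one subset_iff)
    then show "\<one>\<^bsub>AutoGroup G\<^esub> \<in> aut_stabilizer G Y"
      using A.one_closed by (simp add: aut_stabilizer_def)
  next
    fix a assume "a \<in> aut_stabilizer G Y"
    then have a: "a \<in> auto G" "(\<lambda>C. a ` C) ` Y = Y" by (auto simp: aut_stabilizer_def)
    have "(\<lambda>C. (inv\<^bsub>AutoGroup G\<^esub> a) ` C) ` (\<lambda>C. a ` C) ` Y =
          (\<lambda>C. (inv\<^bsub>AutoGroup G\<^esub> a) ` a ` C) ` Y"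
      by (rule image_image)
    also have "\<dots> = (\<lambda>C. C) ` Y"
      using image_AutoGroup_inv[OF a(1)] assms by (intro image_cong) auto
    finally have "(\<lambda>C. (inv\<^bsub>AutoGroup G\<^esub> a) ` C) ` (\<lambda>C. a ` C) ` Y = Y" by simp
    then show "inv\<^bsub>AutoGroup G\<^esub> a \<in> aut_stabilizer G Y"
      using a A.inv_closed by (simp add: aut_stabilizer_def)
  qed
qed

text \<open>Abstracts the group Lb \<le> H/N of the theorem: a group of subsets of G, multiplied setwise.\<close>

locale set_mult_group = G: group G + Q: group Q
  for G :: "('a, 'b) monoid_scheme" (structure) and Q :: "('a set, 'c) monoid_scheme" +
  assumes carrier_subsets: "carrier Q \<subseteq> Pow (carrier G)"
    and mult_eq_set_mult: "\<lbrakk>C \<in> carrier Q; D \<in> carrier Q\<rbrakk> \<Longrightarrow> C \<otimes>\<^bsub>Q\<^esub> D = C <#> D"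
begin

abbreviation stab where "stab \<equiv> aut_stabilizer G (carrier Q)"

lemma subgroup_stab: "subgroup stab (AutoGroup G)"
  by (rule G.subgroup_aut_stabilizer[OF carrier_subsets])

lemma induced_aut_in_auto:
  assumes "a \<in> stab"
  shows "induced_aut (carrier Q) a \<in> auto Q"
proof -
  have a: "a \<in> auto G" "(\<lambda>C. a ` C) ` carrier Q = carrier Q"
    using assms by (auto simp: aut_stabilizer_def)
  have "a ` (C \<otimes>\<^bsub>Q\<^esub> D) = a ` C \<otimes>\<^bsub>Q\<^esub> a ` D" if "C \<in> carrier Q" "D \<in> carrier Q" for C D
  proof -
    have "a ` C \<in> carrier Q" "a ` D \<in> carrier Q" using a(2) that by blast+
    then show ?thesis
      using that a(1) carrier_subsets by (simp add: mult_eq_set_mult auto_image_set_mult subset_iff)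
  qed
  then have "induced_aut (carrier Q) a \<in> hom Q Q"
    using a(2) by (auto simp: hom_def induced_aut_def)
  moreover have "inj_on a (carrier G)"
    using a(1) by (auto simp: auto_def Bij_def bij_betw_def)
  then have "inj_on (\<lambda>C. a ` C) (carrier Q)"
    using carrier_subsets by (intro inj_onI) (simp add: inj_on_image_eq_iff subset_iff)
  then have "induced_aut (carrier Q) a \<in> Bij (carrier Q)"
    using a(2) by (auto simp: Bij_def bij_betw_def induced_aut_def inj_on_def)
  ultimately show ?thesis by (simp add: auto_def)
qed

lemma induced_aut_mult:
  assumes "a \<in> stab" "b \<in> stab"
  shows "induced_aut (carrier Q) (a \<otimes>\<^bsub>AutoGroup G\<^esub> b) =
         induced_aut (carrier Q) a \<otimes>\<^bsub>AutoGroup Q\<^esub> induced_aut (carrier Q) b"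
proof -
  have ab: "a \<in> auto G" "b \<in> auto G" "(\<lambda>C. b ` C) ` carrier Q = carrier Q"
    using assms by (auto simp: aut_stabilizer_def)
  have "induced_aut (carrier Q) (a \<otimes>\<^bsub>AutoGroup G\<^esub> b) =
        compose (carrier Q) (induced_aut (carrier Q) a) (induced_aut (carrier Q) b)"
  proof
    fix C
    show "induced_aut (carrier Q) (a \<otimes>\<^bsub>AutoGroup G\<^esub> b) C =
          compose (carrier Q) (induced_aut (carrier Q) a) (induced_aut (carrier Q) b) C"
    proof (cases "C \<in> carrier Q")
      case True
      then have "b ` C \<in> carrier Q" "C \<subseteq> carrier G" using ab(3) carrier_subsets by blast+
      then show ?thesis
        using True by (simp add: induced_aut_def compose_def image_AutoGroup_mult[OF ab(1,2)])
    qed (simp add: induced_aut_def compose_def)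
  qed
  then show ?thesis
    using assms by (simp add: AutoGroup_mult induced_aut_in_auto)
qed

lemma group_hom_induced_aut:
  "group_hom (AutoGroup G\<lparr>carrier := stab\<rparr>) (AutoGroup Q) (induced_aut (carrier Q))"
proof -
  have "induced_aut (carrier Q) \<in> hom (AutoGroup G\<lparr>carrier := stab\<rparr>) (AutoGroup Q)"
    using induced_aut_in_auto induced_aut_mult by (auto simp: hom_def)
  moreover have "group (AutoGroup G\<lparr>carrier := stab\<rparr>)"
    using group.subgroup_imp_group[OF G.AutoGroup subgroup_stab] .
  ultimately show ?thesis
    using Q.AutoGroup by (simp add: group_hom_def group_hom_axioms_def)
qed

lemma stab_induced_aut_eqI:
  assumes "a \<in> auto G" "f \<in> auto Q" "\<And>C. C \<in> carrier Q \<Longrightarrow> a ` C = f C"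
  shows "a \<in> stab" and "induced_aut (carrier Q) a = f"
proof -
  have f: "f \<in> extensional (carrier Q)" "f ` carrier Q = carrier Q"
    using assms(2) by (auto simp: auto_def Bij_def bij_betw_def)
  have "(\<lambda>C. a ` C) ` carrier Q = f ` carrier Q"
    using assms(3) by (rule image_cong[OF refl])
  then show "a \<in> stab" using assms(1) f(2) by (simp add: aut_stabilizer_def)
  show "induced_aut (carrier Q) a = f"
    unfolding induced_aut_def using assms(3) by (intro extensionalityI[OF _ f(1)]) auto
qed

lemma induced_aut_aut_conj:
  assumes "a \<in> stab" "inner_aut G g \<in> stab"
    and "induced_aut (carrier Q) (inner_aut G g) = inner_aut Q C"
  shows "aut_conj G a g \<in> stab"
    and "induced_aut (carrier Q) (aut_conj G a g) = aut_conj Q (induced_aut (carrier Q) a) C"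
proof -
  let ?A = "AutoGroup G" and ?i = "inner_aut G g" and ?\<phi> = "induced_aut (carrier Q)"
  interpret \<phi>: group_hom "?A\<lparr>carrier := stab\<rparr>" "AutoGroup Q" ?\<phi>
    by (rule group_hom_induced_aut)
  have inv: "inv\<^bsub>?A\<^esub> ?i = inv\<^bsub>?A\<lparr>carrier := stab\<rparr>\<^esub> ?i"
    using group.m_inv_consistent[OF G.AutoGroup subgroup_stab assms(2)] by simp
  have inv_in: "inv\<^bsub>?A\<^esub> ?i \<in> stab" by (rule subgroup.m_inv_closed[OF subgroup_stab assms(2)])
  have "inv\<^bsub>?A\<^esub> ?i \<otimes>\<^bsub>?A\<^esub> a \<in> stab" by (rule subgroup.m_closed[OF subgroup_stab inv_in assms(1)])
  then show "aut_conj G a g \<in> stab"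
    unfolding aut_conj_def by (rule subgroup.m_closed[OF subgroup_stab _ assms(2)])
  have "?\<phi> (aut_conj G a g) = ?\<phi> (inv\<^bsub>?A\<^esub> ?i) \<otimes>\<^bsub>AutoGroup Q\<^esub> ?\<phi> a \<otimes>\<^bsub>AutoGroup Q\<^esub> ?\<phi> ?i"
    using assms(1,2) inv_in \<phi>.hom_mult \<phi>.G.m_closed unfolding aut_conj_def by simp
  then show "?\<phi> (aut_conj G a g) = aut_conj Q (?\<phi> a) C"
    using assms(2,3) inv \<phi>.hom_inv unfolding aut_conj_def by simp
qed

end

lemma beta_le_if_conjugates_lift:
  assumes "group G" "finite (carrier G)" "subgroup S (AutoGroup G)"
    and "group_hom (AutoGroup G\<lparr>carrier := S\<rparr>) (AutoGroup Q) \<phi>"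
    and "\<And>C. C \<in> carrier Q \<Longrightarrow>
           \<exists>g\<in>carrier G. aut_conj G x g \<in> S \<and> \<phi> (aut_conj G x g) = aut_conj Q y C"
  shows "beta r G x \<le> beta r Q y"
proof -
  obtain lift where lift: "\<And>C. C \<in> carrier Q \<Longrightarrow>
      lift C \<in> carrier G \<and> aut_conj G x (lift C) \<in> S \<and> \<phi> (aut_conj G x (lift C)) = aut_conj Q y C"
    using assms(5) by metis
  have finite_S: "finite S"
    using subgroup.subset[OF assms(3)] finite_auto[OF assms(2)] by (auto intro: finite_subset)
  have "\<exists>gs. length gs = length cs \<and> set gs \<subseteq> carrier G \<and>
            r dvd card (generate (AutoGroup G) (aut_conj G x ` set gs))"
    if cs: "set cs \<subseteq> carrier Q" "r dvd card (generate (AutoGroup Q) (aut_conj Q y ` set cs))" for cs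
  proof -
    let ?Y = "aut_conj G x ` set (map lift cs)"
    have "?Y \<subseteq> S" using lift cs(1) by auto
    moreover have "\<phi> ` ?Y = aut_conj Q y ` set cs"
      using lift cs(1) by (force simp: image_image)
    ultimately have "card (generate (AutoGroup Q) (aut_conj Q y ` set cs)) dvd
                     card (generate (AutoGroup G) ?Y)"
      using generate_hom_image_card_dvd[OF group.AutoGroup[OF assms(1)] assms(3) finite_S assms(4)]
      by metis
    then show ?thesis
      using cs lift by (intro exI[of _ "map lift cs"]) (auto intro: dvd_trans)
  qed
  then show ?thesis unfolding beta_def by (intro Inf_superset_mono) blast
qed

lemma set_mult_group_section:
  assumes "group G" "subgroup H G" "N \<lhd> G\<lparr>carrier := H\<rparr>" "subgroup K (G\<lparr>carrier := H\<rparr> Mod N)"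
  shows "set_mult_group G ((G\<lparr>carrier := H\<rparr> Mod N)\<lparr>carrier := K\<rparr>)"
proof -
  interpret N: normal N "G\<lparr>carrier := H\<rparr>" by fact
  interpret HN: group "G\<lparr>carrier := H\<rparr> Mod N" by (rule N.factorgroup_is_group)
  have "C \<subseteq> carrier G" if "C \<in> K" for C
    using that subgroup.subset[OF assms(4)] N.rcosets_carrier[OF N.is_group] subgroup.subset[OF assms(2)]
    by (auto simp: FactGroup_def)
  then show ?thesis
    using assms(1) HN.subgroup_imp_group[OF assms(4)]
    by (auto simp: set_mult_group_def set_mult_group_axioms_def)
qed

lemma section_induced_inner_aut:
  assumes "group G" "subgroup H G" "N \<lhd> G\<lparr>carrier := H\<rparr>" "subgroup K (G\<lparr>carrier := H\<rparr> Mod N)"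
    and "g \<in> H" "N #>\<^bsub>G\<^esub> g \<in> K"
  shows "inner_aut G g \<in> aut_stabilizer G K"
    and "induced_aut K (inner_aut G g) = inner_aut ((G\<lparr>carrier := H\<rparr> Mod N)\<lparr>carrier := K\<rparr>) (N #>\<^bsub>G\<^esub> g)"
proof -
  let ?H = "G\<lparr>carrier := H\<rparr>" and ?K = "(G\<lparr>carrier := H\<rparr> Mod N)\<lparr>carrier := K\<rparr>"
  interpret set_mult_group G ?K using set_mult_group_section[OF assms(1-4)] .
  interpret N: normal N ?H by fact
  interpret HN: group "?H Mod N" by (rule N.factorgroup_is_group)
  have "inner_aut G g ` D = inner_aut ?K (N #>\<^bsub>G\<^esub> g) D" if D: "D \<in> K" for D
  proof -
    have "D \<in> carrier (?H Mod N)" "D \<subseteq> H"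
      using D subgroup.subset[OF assms(4)] N.rcosets_carrier[OF N.is_group]
      by (auto simp: FactGroup_def)
    then have "inner_aut ?K (N #>\<^bsub>G\<^esub> g) D = inner_aut ?H g ` D"
      using assms(4-6) D N.inner_aut_FactGroup[of g D]
      by (auto simp: inner_aut_subgroup[OF HN.is_group assms(4)])
    also have "\<dots> = inner_aut G g ` D"
      using \<open>D \<subseteq> H\<close> assms(5) by (auto simp: inner_aut_subgroup[OF assms(1,2)] subsetD)
    finally show ?thesis by simp
  qed
  then show "inner_aut G g \<in> aut_stabilizer G K"
    and "induced_aut K (inner_aut G g) = inner_aut ?K (N #>\<^bsub>G\<^esub> g)"
    using stab_induced_aut_eqI[OF G.inner_aut_in_auto Q.inner_aut_in_auto] assms(5,6)
      subgroup.subset[OF assms(2)] by auto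
qed

theorem lemma1p4:
  fixes L :: "('a, 'b) monoid_scheme" and x :: "'a \<Rightarrow> 'a" and r :: nat
    and H N :: "'a set" and Lb :: "'a set set"
  assumes "simple_group L" and "finite (carrier L)" and "\<not> comm_group L"
    and "Factorial_Ring.prime r" and "r dvd order L"
    and "x \<in> auto L" and "x \<noteq> (\<lambda>a\<in>carrier L. a)"
    and "subgroup H L" and "x ` H = H"
    and "N \<lhd> L\<lparr>carrier := H\<rparr>" and "x ` N = N"
    and "subgroup Lb (L\<lparr>carrier := H\<rparr> Mod N)"
    and "simple_group ((L\<lparr>carrier := H\<rparr> Mod N)\<lparr>carrier := Lb\<rparr>)"
    and "(\<lambda>C. x ` C) ` Lb = Lb"
    and "\<exists>C\<in>Lb. x ` C \<noteq> C"
    and "r dvd card Lb"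
  shows "beta r L x \<le> beta r ((L\<lparr>carrier := H\<rparr> Mod N)\<lparr>carrier := Lb\<rparr>) (\<lambda>C\<in>Lb. x ` C)"
proof -
  let ?Lb = "(L\<lparr>carrier := H\<rparr> Mod N)\<lparr>carrier := Lb\<rparr>"
  have L: "group L" using assms(1) by (rule simple_group.axioms(1))
  note section_hyps = L assms(8,10,12)
  interpret set_mult_group L ?Lb by (rule set_mult_group_section[OF section_hyps])
  have x: "x \<in> stab" using assms(6,14) by (simp add: aut_stabilizer_def)
  have "\<exists>g\<in>carrier L. aut_conj L x g \<in> stab \<and>
      induced_aut Lb (aut_conj L x g) = aut_conj ?Lb (induced_aut Lb x) C" if "C \<in> Lb" for C
  proof -
    obtain g where g: "g \<in> H" "C = N #>\<^bsub>L\<^esub> g"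
      using \<open>C \<in> Lb\<close> subgroup.subset[OF assms(12)] by (auto simp: FactGroup_def RCOSETS_def)
    then have "inner_aut L g \<in> stab" "induced_aut Lb (inner_aut L g) = inner_aut ?Lb C"
      using section_induced_inner_aut[OF section_hyps g(1)] \<open>C \<in> Lb\<close> by simp_all
    then show ?thesis
      using induced_aut_aut_conj[OF x] g(1) subgroup.subset[OF assms(8)]
      by (intro bexI[of _ g]) auto
  qed
  then have "beta r L x \<le> beta r ?Lb (induced_aut Lb x)"
    by (intro beta_le_if_conjugates_lift[OF L assms(2) subgroup_stab group_hom_induced_aut]) simp
  then show ?thesis by (simp add: induced_aut_def)
qed

end
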